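(* Fix $k\ge0$. Let $\mathcal G$ be a discrete groupoid acting self-similarly on a locally convex $(k+1)$-graph $\Lambda$, and let $\Gamma=d^{-1}(\mathbb N^k\times\{0\})$. Then every finite subset $F\subseteq v(\Gamma\bowtie\mathcal G)$ ($v\in\Lambda^0$) that is exhaustive in $\Gamma\bowtie\mathcal G$ is exhaustive in $\Lambda\bowtie\mathcal G$.
   Context: A $(k+1)$-graph is a countable small category $\Lambda$ with a functor $d:\Lambda\to\mathbb N^{k+1}$ with unique factorisation (whenever $d(\lambda)=m+n$ there are unique $\mu,\nu$ with $\lambda=\mu\nu$, $d(\mu)=m$, $d(\nu)=n$); $\Lambda^n=d^{-1}(n)$. Locally convex: for $i\ne j$, if $e\in\Lambda^{e_i}$ and $r(e)\Lambda^{e_j}\ne\emptyset$ then $s(e)\Lambda^{e_j}\ne\emptyset$. A self-similar action of a discrete groupoid $\mathcal G$ ($\mathcal G^0=\Lambda^0$) on $\Lambda$: left action $g\triangleright\lambda\in\Lambda$, right action $g\triangleleft\lambda\in\mathcal G$ (for $s(g)=r(\lambda)$) with $s(g\triangleright\lambda)=r(g\triangleleft\lambda)$, $g\triangleright(\lambda\mu)=(g\triangleright\lambda)((g\triangleleft\lambda)\triangleright\mu)$, $(gh)\triangleleft\lambda=(g\triangleleft(h\triangleright\lambda))(h\triangleleft\lambda)$, $d(g\triangleright\lambda)=d(\lambda)$. $\Lambda\bowtie\mathcal G$ has morphisms $\lambda g$ ($s(\lambda)=r(g)$), product $\lambda g\mu h=\lambda(g\triangleright\mu)(g\triangleleft\mu)h$;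 $\Gamma\bowtie\mathcal G$ is a subcategory. For a category $\mathcal C$ and $v\in\mathcal C^0$, $F\subseteq v\mathcal C$ is exhaustive in $\mathcal C$ if for every $c\in v\mathcal C$ there is $a\in F$ with $c\mathcal C\cap a\mathcal C\ne\emptyset$. *)

theory Defs
  imports Main "HOL-Library.Countable_Set"
begin

text \<open>A small category whose objects are represented by identity morphisms,
  equipped with a degree functor into N^n (functions nat => nat vanishing at indices >= n).\<close>

record 'a kgraph =
  KMor :: "'a set"
  KSrc :: "'a \<Rightarrow> 'a"
  KRng :: "'a \<Rightarrow> 'a"
  KCmp :: "'a \<Rightarrow> 'a \<Rightarrow> 'a"
  KDeg :: "'a \<Rightarrow> nat \<Rightarrow> nat"

definition vertices :: "'a kgraph \<Rightarrow> 'a set" where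
  "vertices L = KRng L ` KMor L"

definition is_category :: "'a kgraph \<Rightarrow> bool" where
  "is_category L \<longleftrightarrow>
     (\<forall>x\<in>KMor L. KSrc L x \<in> KMor L \<and> KRng L x \<in> KMor L
        \<and> KSrc L (KSrc L x) = KSrc L x \<and> KRng L (KSrc L x) = KSrc L x
        \<and> KSrc L (KRng L x) = KRng L x \<and> KRng L (KRng L x) = KRng L x
        \<and> KCmp L (KRng L x) x = x \<and> KCmp L x (KSrc L x) = x)
   \<and> (\<forall>x\<in>KMor L. \<forall>y\<in>KMor L. KSrc L x = KRng L y \<longrightarrow>
        KCmp L x y \<in> KMor L \<and> KRng L (KCmp L x y) = KRng L x \<and> KSrc L (KCmp L x y) = KSrc L y)
   \<and> (\<forall>x\<in>KMor L. \<forall>y\<in>KMor L. \<forall>z\<in>KMor L. KSrc L x = KRng L y \<longrightarrow> KSrc L y = KRng L z \<longrightarrow>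
        KCmp L (KCmp L x y) z = KCmp L x (KCmp L y z))"

text \<open>An n-graph (n = k+1 in the paper): countable small category with a degree functor
  d into N^n having the unique factorisation property.\<close>

definition is_kgraph :: "nat \<Rightarrow> 'a kgraph \<Rightarrow> bool" where
  "is_kgraph n L \<longleftrightarrow> is_category L \<and> countable (KMor L)
   \<and> (\<forall>x\<in>KMor L. \<forall>i\<ge>n. KDeg L x i = 0)
   \<and> (\<forall>v\<in>vertices L. KDeg L v = (\<lambda>_. 0))
   \<and> (\<forall>x\<in>KMor L. \<forall>y\<in>KMor L. KSrc L x = KRng L y \<longrightarrow>
        KDeg L (KCmp L x y) = (\<lambda>i. KDeg L x i + KDeg L y i))
   \<and> (\<forall>x\<in>KMor L. \<forall>m p. KDeg L x = (\<lambda>i. m i + p i) \<longrightarrow>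
        (\<exists>!q. case q of (a, b) \<Rightarrow> a \<in> KMor L \<and> b \<in> KMor L \<and> KSrc L a = KRng L b
                 \<and> KCmp L a b = x \<and> KDeg L a = m \<and> KDeg L b = p))"

definition unitv :: "nat \<Rightarrow> nat \<Rightarrow> nat" where
  "unitv i = (\<lambda>j. if j = i then 1 else 0)"

definition locally_convex :: "nat \<Rightarrow> 'a kgraph \<Rightarrow> bool" where
  "locally_convex n L \<longleftrightarrow>
    (\<forall>i<n. \<forall>j<n. i \<noteq> j \<longrightarrow> (\<forall>e\<in>KMor L. KDeg L e = unitv i \<longrightarrow>
       (\<exists>f\<in>KMor L. KRng L f = KRng L e \<and> KDeg L f = unitv j) \<longrightarrow>
       (\<exists>f\<in>KMor L. KRng L f = KSrc L e \<and> KDeg L f = unitv j)))"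

text \<open>A (discrete) groupoid whose unit space is identified with the set V:
  the unit at v is GId v.\<close>

record ('g, 'a) groupoid =
  GMor :: "'g set"
  GSrc :: "'g \<Rightarrow> 'a"
  GRng :: "'g \<Rightarrow> 'a"
  GCmp :: "'g \<Rightarrow> 'g \<Rightarrow> 'g"
  GId  :: "'a \<Rightarrow> 'g"
  GInv :: "'g \<Rightarrow> 'g"

definition groupoid_on :: "'a set \<Rightarrow> ('g, 'a) groupoid \<Rightarrow> bool" where
  "groupoid_on V G \<longleftrightarrow>
     (\<forall>v\<in>V. GId G v \<in> GMor G \<and> GSrc G (GId G v) = v \<and> GRng G (GId G v) = v)
   \<and> (\<forall>g\<in>GMor G. GSrc G g \<in> V \<and> GRng G g \<in> V
        \<and> GCmp G g (GId G (GSrc G g)) = g \<and> GCmp G (GId G (GRng G g)) g = g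
        \<and> GInv G g \<in> GMor G \<and> GSrc G (GInv G g) = GRng G g \<and> GRng G (GInv G g) = GSrc G g
        \<and> GCmp G g (GInv G g) = GId G (GRng G g) \<and> GCmp G (GInv G g) g = GId G (GSrc G g))
   \<and> (\<forall>g\<in>GMor G. \<forall>h\<in>GMor G. GSrc G g = GRng G h \<longrightarrow>
        GCmp G g h \<in> GMor G \<and> GRng G (GCmp G g h) = GRng G g \<and> GSrc G (GCmp G g h) = GSrc G h)
   \<and> (\<forall>f\<in>GMor G. \<forall>g\<in>GMor G. \<forall>h\<in>GMor G. GSrc G f = GRng G g \<longrightarrow> GSrc G g = GRng G h \<longrightarrow>
        GCmp G (GCmp G f g) h = GCmp G f (GCmp G g h))"

text \<open>Self-similar action: lact g x is g |> x, ract g x is g <| x (defined for s(g) = r(x)).\<close>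

definition self_similar_action ::
  "'a kgraph \<Rightarrow> ('g, 'a) groupoid \<Rightarrow> ('g \<Rightarrow> 'a \<Rightarrow> 'a) \<Rightarrow> ('g \<Rightarrow> 'a \<Rightarrow> 'g) \<Rightarrow> bool" where
  "self_similar_action L G lact ract \<longleftrightarrow>
     (\<forall>g\<in>GMor G. \<forall>x\<in>KMor L. GSrc G g = KRng L x \<longrightarrow>
        lact g x \<in> KMor L \<and> ract g x \<in> GMor G
        \<and> KRng L (lact g x) = GRng G g
        \<and> KDeg L (lact g x) = KDeg L x
        \<and> KSrc L (lact g x) = GRng G (ract g x)
        \<and> GSrc G (ract g x) = KSrc L x)
   \<and> (\<forall>x\<in>KMor L. lact (GId G (KRng L x)) x = x)
   \<and> (\<forall>g\<in>GMor G. \<forall>h\<in>GMor G. \<forall>x\<in>KMor L. GSrc G g = GRng G h \<longrightarrow> GSrc G h = KRng L x \<longrightarrow>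
        lact (GCmp G g h) x = lact g (lact h x)
        \<and> ract (GCmp G g h) x = GCmp G (ract g (lact h x)) (ract h x))
   \<and> (\<forall>g\<in>GMor G. \<forall>x\<in>KMor L. \<forall>y\<in>KMor L. GSrc G g = KRng L x \<longrightarrow> KSrc L x = KRng L y \<longrightarrow>
        lact g (KCmp L x y) = KCmp L (lact g x) (lact (ract g x) y)
        \<and> ract g (KCmp L x y) = ract (ract g x) y)
   \<and> (\<forall>g\<in>GMor G. ract g (GSrc G g) = g)"

text \<open>Zappa-Szep product restricted to the morphisms of L satisfying P
  (P = True gives L bowtie G; P x = (d(x)_k = 0) gives Gamma bowtie G).\<close>

definition zs_mor :: "'a kgraph \<Rightarrow> ('g, 'a) groupoid \<Rightarrow> ('a \<Rightarrow> bool) \<Rightarrow> ('a \<times> 'g) set" where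
  "zs_mor L G P = {(x, g). x \<in> KMor L \<and> P x \<and> g \<in> GMor G \<and> KSrc L x = GRng G g}"

definition zs_rng :: "'a kgraph \<Rightarrow> ('a \<times> 'g) \<Rightarrow> 'a" where
  "zs_rng L c = KRng L (fst c)"

definition zs_src :: "('g, 'a) groupoid \<Rightarrow> ('a \<times> 'g) \<Rightarrow> 'a" where
  "zs_src G c = GSrc G (snd c)"

definition zs_cmp :: "'a kgraph \<Rightarrow> ('g, 'a) groupoid \<Rightarrow> ('g \<Rightarrow> 'a \<Rightarrow> 'a) \<Rightarrow> ('g \<Rightarrow> 'a \<Rightarrow> 'g)
    \<Rightarrow> ('a \<times> 'g) \<Rightarrow> ('a \<times> 'g) \<Rightarrow> ('a \<times> 'g)" where
  "zs_cmp L G lact ract c e =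
     (KCmp L (fst c) (lact (snd c) (fst e)), GCmp G (ract (snd c) (fst e)) (snd e))"

text \<open>F \<subseteq> vC is exhaustive in C: every c in vC has a in F with cC \<inter> aC nonempty.\<close>

definition exhaustive ::
  "'c set \<Rightarrow> ('c \<Rightarrow> 'o) \<Rightarrow> ('c \<Rightarrow> 'o) \<Rightarrow> ('c \<Rightarrow> 'c \<Rightarrow> 'c) \<Rightarrow> 'o \<Rightarrow> 'c set \<Rightarrow> bool" where
  "exhaustive C rng src cmp v F \<longleftrightarrow>
     F \<subseteq> {c \<in> C. rng c = v} \<and>
     (\<forall>c\<in>C. rng c = v \<longrightarrow>
        (\<exists>a\<in>F. \<exists>x\<in>C. \<exists>y\<in>C. src c = rng x \<and> src a = rng y \<and> cmp c x = cmp a y))"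

end

theory Submission
  imports Defs
begin

text \<open>Let \<open>N\<close> be the componentwise sum of the degrees of the paths occurring in \<open>F\<close>.
  Any \<open>(\<lambda>, g)\<close> extends to \<open>(\<lambda>\<tau>, 1)\<close> where, in each of the first \<open>k\<close> colours, \<open>\<lambda>\<tau>\<close> either
  has degree at least \<open>N\<close> or cannot be extended further. Factor \<open>\<lambda>\<tau> = \<beta>\<rho>\<close> with \<open>\<beta> \<in> \<Gamma>\<close> and \<open>\<rho>\<close> of
  colour \<open>k\<close>; local convexity transfers the non-extendability from \<open>s(\<rho>)\<close> to \<open>s(\<beta>)\<close>.
  Exhaustiveness in \<open>\<Gamma> \<bowtie> \<G>\<close> gives \<open>(\<alpha>, h) \<in> F\<close> with \<open>\<beta>\<mu> = \<alpha>\<nu>\<close>, and the choice of \<open>N\<close> forces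
  \<open>d(\<alpha>) \<le> d(\<beta>)\<close>, so \<open>\<alpha>\<close> is a prefix of \<open>\<lambda>\<tau>\<close> by unique factorisation. Finally \<open>(\<lambda>\<tau>, 1)\<close> is a
  common extension of \<open>(\<lambda>, g)\<close> and \<open>(\<alpha>, h)\<close>, because the left action of \<open>h\<close> is invertible.\<close>

locale higher_rank_graph =
  fixes n :: nat and L :: "'a kgraph"
  assumes is_kgraph: "is_kgraph n L"
begin

lemma is_category: "is_category L"
  using is_kgraph by (simp add: is_kgraph_def)

lemma src_in_mor: "x \<in> KMor L \<Longrightarrow> KSrc L x \<in> KMor L"
  and rng_in_mor: "x \<in> KMor L \<Longrightarrow> KRng L x \<in> KMor L"
  and rng_src: "x \<in> KMor L \<Longrightarrow> KRng L (KSrc L x) = KSrc L x"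
  and src_rng: "x \<in> KMor L \<Longrightarrow> KSrc L (KRng L x) = KRng L x"
  and cmp_rng_left: "x \<in> KMor L \<Longrightarrow> KCmp L (KRng L x) x = x"
  and cmp_src_right: "x \<in> KMor L \<Longrightarrow> KCmp L x (KSrc L x) = x"
  using is_category by (simp_all add: is_category_def)

lemma cmp_in_mor: "x \<in> KMor L \<Longrightarrow> y \<in> KMor L \<Longrightarrow> KSrc L x = KRng L y \<Longrightarrow> KCmp L x y \<in> KMor L"
  and rng_cmp: "x \<in> KMor L \<Longrightarrow> y \<in> KMor L \<Longrightarrow> KSrc L x = KRng L y \<Longrightarrow> KRng L (KCmp L x y) = KRng L x"
  and src_cmp: "x \<in> KMor L \<Longrightarrow> y \<in> KMor L \<Longrightarrow> KSrc L x = KRng L y \<Longrightarrow> KSrc L (KCmp L x y) = KSrc L y"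
  using is_category by (simp_all add: is_category_def)

lemma cmp_assoc:
  "x \<in> KMor L \<Longrightarrow> y \<in> KMor L \<Longrightarrow> z \<in> KMor L \<Longrightarrow> KSrc L x = KRng L y \<Longrightarrow> KSrc L y = KRng L z \<Longrightarrow>
    KCmp L (KCmp L x y) z = KCmp L x (KCmp L y z)"
  using is_category unfolding is_category_def by blast

lemma src_in_vertices: "x \<in> KMor L \<Longrightarrow> KSrc L x \<in> vertices L"
  unfolding vertices_def by (metis image_eqI rng_src src_in_mor)

lemma rng_in_vertices: "x \<in> KMor L \<Longrightarrow> KRng L x \<in> vertices L"
  unfolding vertices_def by blast

lemma deg_vanishes_above: "x \<in> KMor L \<Longrightarrow> n \<le> i \<Longrightarrow> KDeg L x i = 0"
  using is_kgraph by (simp add: is_kgraph_def)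

lemma deg_vertex: "u \<in> vertices L \<Longrightarrow> KDeg L u = (\<lambda>_. 0)"
  using is_kgraph by (simp add: is_kgraph_def)

lemma deg_cmp:
  "x \<in> KMor L \<Longrightarrow> y \<in> KMor L \<Longrightarrow> KSrc L x = KRng L y \<Longrightarrow>
    KDeg L (KCmp L x y) = (\<lambda>i. KDeg L x i + KDeg L y i)"
  using is_kgraph by (simp add: is_kgraph_def)

lemma factorisation_exists:
  assumes "x \<in> KMor L" and "KDeg L x = (\<lambda>i. m i + p i)"
  obtains a b where "a \<in> KMor L" "b \<in> KMor L" "KSrc L a = KRng L b" "KCmp L a b = x"
    "KDeg L a = m" "KDeg L b = p"
proof -
  from is_kgraph assms obtain q where "case q of (a, b) \<Rightarrow> a \<in> KMor L \<and> b \<in> KMor L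
      \<and> KSrc L a = KRng L b \<and> KCmp L a b = x \<and> KDeg L a = m \<and> KDeg L b = p"
    unfolding is_kgraph_def by blast
  with that show ?thesis by (cases q) auto
qed

lemma factorisation_unique:
  assumes "a \<in> KMor L" "b \<in> KMor L" "KSrc L a = KRng L b"
    and "a' \<in> KMor L" "b' \<in> KMor L" "KSrc L a' = KRng L b'"
    and "KCmp L a b = KCmp L a' b'" "KDeg L a = KDeg L a'" "KDeg L b = KDeg L b'"
  shows "a = a' \<and> b = b'"
proof -
  let ?x = "KCmp L a b" and ?m = "KDeg L a" and ?p = "KDeg L b"
  have "?x \<in> KMor L" "KDeg L ?x = (\<lambda>i. ?m i + ?p i)"
    using assms(1-3) by (simp_all add: cmp_in_mor deg_cmp)
  with is_kgraph have "\<exists>!q. case q of (a, b) \<Rightarrow> a \<in> KMor L \<and> b \<in> KMor L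
      \<and> KSrc L a = KRng L b \<and> KCmp L a b = ?x \<and> KDeg L a = ?m \<and> KDeg L b = ?p"
    unfolding is_kgraph_def by blast
  then have "(a, b) = (a', b')"
    using assms by (metis (mono_tags, lifting) case_prod_conv)
  then show ?thesis by simp
qed

lemma deg_zero_is_vertex:
  assumes "x \<in> KMor L" and "KDeg L x = (\<lambda>_. 0)"
  shows "KRng L x = x"
  using factorisation_unique[of "KRng L x" x x "KSrc L x"] assms
  by (simp add: rng_in_mor src_in_mor src_rng rng_src cmp_rng_left cmp_src_right
      deg_vertex rng_in_vertices src_in_vertices)

text \<open>Split \<open>\<nu>\<close> at degree \<open>d(\<beta>) - d(\<alpha>)\<close>; unique factorisation of \<open>\<beta>\<mu>\<close> identifies \<open>\<beta>\<close>.\<close>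

lemma prefix_of_common_extension:
  assumes "\<beta> \<in> KMor L" "\<mu> \<in> KMor L" "KSrc L \<beta> = KRng L \<mu>"
    and "\<alpha> \<in> KMor L" "\<nu> \<in> KMor L" "KSrc L \<alpha> = KRng L \<nu>"
    and eq: "KCmp L \<beta> \<mu> = KCmp L \<alpha> \<nu>"
    and le: "\<And>i. KDeg L \<alpha> i \<le> KDeg L \<beta> i"
  obtains \<omega> where "\<omega> \<in> KMor L" "KRng L \<omega> = KSrc L \<alpha>" "\<beta> = KCmp L \<alpha> \<omega>"
proof -
  define \<delta> where "\<delta> i = KDeg L \<beta> i - KDeg L \<alpha> i" for i
  have deg_sum: "KDeg L \<beta> i + KDeg L \<mu> i = KDeg L \<alpha> i + KDeg L \<nu> i" for i
    using arg_cong[OF eq, of "\<lambda>x. KDeg L x i"] assms(1-6) by (simp add: deg_cmp)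
  then have "KDeg L \<nu> = (\<lambda>i. \<delta> i + KDeg L \<mu> i)"
    using le by (auto simp: \<delta>_def fun_eq_iff intro: le_add_diff_inverse2)
  then obtain \<omega> \<nu>' where \<omega>: "\<omega> \<in> KMor L" "\<nu>' \<in> KMor L" "KSrc L \<omega> = KRng L \<nu>'"
    "KCmp L \<omega> \<nu>' = \<nu>" "KDeg L \<omega> = \<delta>" "KDeg L \<nu>' = KDeg L \<mu>"
    by (rule factorisation_exists[OF assms(5)])
  have rng_\<omega>: "KRng L \<omega> = KSrc L \<alpha>"
    using rng_cmp[OF \<omega>(1-3)] \<omega>(4) assms(6) by simp
  have "KDeg L (KCmp L \<alpha> \<omega>) = KDeg L \<beta>"
    using \<omega> assms(4) rng_\<omega> le by (simp add: deg_cmp \<delta>_def fun_eq_iff)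
  moreover have "KCmp L (KCmp L \<alpha> \<omega>) \<nu>' = KCmp L \<beta> \<mu>"
    using eq \<omega> assms(4) rng_\<omega> by (simp add: cmp_assoc)
  ultimately have "\<beta> = KCmp L \<alpha> \<omega>"
    using factorisation_unique[of \<beta> \<mu> "KCmp L \<alpha> \<omega>" \<nu>'] assms(1-4) \<omega> rng_\<omega>
    by (simp add: cmp_in_mor src_cmp)
  with \<omega> rng_\<omega> that show ?thesis by blast
qed

definition has_edge :: "nat \<Rightarrow> 'a \<Rightarrow> bool" where
  "has_edge i u \<longleftrightarrow> (\<exists>e\<in>KMor L. KRng L e = u \<and> KDeg L e = unitv i)"

lemma has_edge_at_rng:
  assumes "\<mu> \<in> KMor L" and "0 < KDeg L \<mu> i"
  shows "has_edge i (KRng L \<mu>)"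
proof -
  have "KDeg L \<mu> = (\<lambda>j. unitv i j + (KDeg L \<mu> j - unitv i j))"
    using assms(2) by (auto simp: unitv_def)
  then obtain e b where e: "e \<in> KMor L" "b \<in> KMor L" "KSrc L e = KRng L b" "KCmp L e b = \<mu>"
      "KDeg L e = unitv i" "KDeg L b = (\<lambda>j. KDeg L \<mu> j - unitv i j)"
    by (rule factorisation_exists[OF assms(1)])
  have "KRng L e = KRng L \<mu>"
    using rng_cmp[OF e(1-3)] e(4) by simp
  with e show ?thesis unfolding has_edge_def by blast
qed

lemma has_edge_at_src_of_edge:
  assumes "locally_convex n L" "i < n" "j < n" "i \<noteq> j"
    and "e \<in> KMor L" "KDeg L e = unitv i" "has_edge j (KRng L e)"
  shows "has_edge j (KSrc L e)"
  using assms unfolding locally_convex_def has_edge_def by blast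

lemma no_edge_along_monochrome_path:
  assumes "locally_convex n L" "k < n" "i < n" "i \<noteq> k"
  shows "\<rho> \<in> KMor L \<Longrightarrow> KDeg L \<rho> = (\<lambda>j. if j = k then t else 0) \<Longrightarrow>
    \<not> has_edge i (KSrc L \<rho>) \<Longrightarrow> \<not> has_edge i (KRng L \<rho>)"
proof (induction t arbitrary: \<rho>)
  case 0
  then have "KRng L \<rho> = \<rho>"
    using deg_zero_is_vertex by (simp add: fun_eq_iff)
  with 0 show ?case using src_rng[OF 0(1)] by simp
next
  case (Suc t \<rho>)
  have "KDeg L \<rho> = (\<lambda>j. unitv k j + (if j = k then t else 0))"
    using Suc.prems by (auto simp: unitv_def)
  then obtain e b where eb: "e \<in> KMor L" "b \<in> KMor L" "KSrc L e = KRng L b" "KCmp L e b = \<rho>"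
      "KDeg L e = unitv k" "KDeg L b = (\<lambda>j. if j = k then t else 0)"
    by (rule factorisation_exists[OF Suc.prems(1)])
  have "\<not> has_edge i (KSrc L e)"
    using Suc.IH[OF eb(2) eb(6)] Suc.prems(3) src_cmp[OF eb(1-3)] eb(3,4) by simp
  then have "\<not> has_edge i (KRng L e)"
    using has_edge_at_src_of_edge[OF assms(1,2,3) assms(4)[symmetric] eb(1,5)] by blast
  then show ?case using rng_cmp[OF eb(1-3)] eb(4) by simp
qed

definition saturated :: "nat \<Rightarrow> (nat \<Rightarrow> nat) \<Rightarrow> 'a \<Rightarrow> bool" where
  "saturated k N p \<longleftrightarrow> (\<forall>i<k. N i \<le> KDeg L p i \<or> \<not> has_edge i (KSrc L p))"

lemma saturated_extension_exists:
  assumes "x \<in> KMor L"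
  obtains \<tau> where "\<tau> \<in> KMor L" "KRng L \<tau> = KSrc L x" "saturated k N (KCmp L x \<tau>)"
proof -
  have "\<exists>\<tau>\<in>KMor L. KRng L \<tau> = KSrc L \<pi> \<and> saturated k N (KCmp L \<pi> \<tau>)"
    if "\<pi> \<in> KMor L" "(\<Sum>i<k. N i - KDeg L \<pi> i) = m" for \<pi> m
    using that
  proof (induction m arbitrary: \<pi> rule: less_induct)
    case (less m \<pi>)
    show ?case
    proof (cases "saturated k N \<pi>")
      case True
      with less.prems show ?thesis
        by (intro bexI[of _ "KSrc L \<pi>"]) (auto simp: cmp_src_right src_in_mor rng_src)
    next
      case False
      then obtain i e where i: "i < k" "KDeg L \<pi> i < N i"
        and e: "e \<in> KMor L" "KRng L e = KSrc L \<pi>" "KDeg L e = unitv i"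
        unfolding saturated_def has_edge_def by force
      define \<pi>' where "\<pi>' = KCmp L \<pi> e"
      have \<pi>': "\<pi>' \<in> KMor L" "KSrc L \<pi>' = KSrc L e"
        "KDeg L \<pi>' = (\<lambda>j. KDeg L \<pi> j + unitv i j)"
        unfolding \<pi>'_def using less.prems e by (simp_all add: cmp_in_mor src_cmp deg_cmp)
      have "(\<Sum>j<k. N j - KDeg L \<pi>' j) < m"
        unfolding less.prems(2)[symmetric]
        by (rule sum_strict_mono_ex1) (use i in \<open>auto simp: \<pi>'(3) unitv_def\<close>)
      from less.IH[OF this \<pi>'(1) refl] obtain \<tau> where
        \<tau>: "\<tau> \<in> KMor L" "KRng L \<tau> = KSrc L e" "saturated k N (KCmp L \<pi>' \<tau>)"
        using \<pi>'(2) by auto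
      have "KCmp L \<pi> (KCmp L e \<tau>) = KCmp L \<pi>' \<tau>"
        unfolding \<pi>'_def using less.prems e \<tau> by (simp add: cmp_assoc)
      with \<tau> e show ?thesis
        by (intro bexI[of _ "KCmp L e \<tau>"]) (simp_all add: cmp_in_mor rng_cmp)
    qed
  qed
  with assms that show ?thesis by blast
qed

lemma saturated_prefix_bound:
  assumes "\<beta> \<in> KMor L" "\<mu> \<in> KMor L" "KSrc L \<beta> = KRng L \<mu>"
    and "\<alpha> \<in> KMor L" "\<nu> \<in> KMor L" "KSrc L \<alpha> = KRng L \<nu>"
    and eq: "KCmp L \<beta> \<mu> = KCmp L \<alpha> \<nu>"
    and sat: "saturated k N \<beta>"
    and below: "\<And>i. i < k \<Longrightarrow> KDeg L \<alpha> i \<le> N i"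
    and above: "\<And>i. k \<le> i \<Longrightarrow> KDeg L \<alpha> i = 0"
  shows "KDeg L \<alpha> i \<le> KDeg L \<beta> i"
proof (cases "i < k")
  case True
  have deg_sum: "KDeg L \<beta> i + KDeg L \<mu> i = KDeg L \<alpha> i + KDeg L \<nu> i"
    using arg_cong[OF eq, of "\<lambda>x. KDeg L x i"] assms(1-6) by (simp add: deg_cmp)
  show ?thesis
  proof (cases "N i \<le> KDeg L \<beta> i")
    case True
    then show ?thesis using below[OF \<open>i < k\<close>] by linarith
  next
    case False
    have "N i \<le> KDeg L \<beta> i \<or> \<not> has_edge i (KSrc L \<beta>)"
      using sat \<open>i < k\<close> unfolding saturated_def by blast
    with False assms(3) have "\<not> has_edge i (KRng L \<mu>)"
      by simp
    then have "KDeg L \<mu> i = 0"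
      using has_edge_at_rng[OF assms(2)] by auto
    with deg_sum show ?thesis by simp
  qed
qed (simp add: above)

lemma saturated_without_last_colour:
  assumes "locally_convex n L" "k < n"
    and "\<beta> \<in> KMor L" "\<rho> \<in> KMor L" "KSrc L \<beta> = KRng L \<rho>"
    and "KDeg L \<rho> = (\<lambda>j. if j = k then t else 0)"
    and "saturated k N (KCmp L \<beta> \<rho>)"
  shows "saturated k N \<beta>"
  unfolding saturated_def
proof (intro allI impI)
  fix i assume "i < k"
  have deg: "KDeg L (KCmp L \<beta> \<rho>) i = KDeg L \<beta> i"
    using assms(3-6) \<open>i < k\<close> by (simp add: deg_cmp)
  have "N i \<le> KDeg L (KCmp L \<beta> \<rho>) i \<or> \<not> has_edge i (KSrc L \<rho>)"
    using assms(3-5,7) \<open>i < k\<close> unfolding saturated_def by (simp add: src_cmp)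
  moreover have "\<not> has_edge i (KSrc L \<rho>) \<Longrightarrow> \<not> has_edge i (KSrc L \<beta>)"
    using no_edge_along_monochrome_path[OF assms(1,2), of i \<rho> t] assms(2-6) \<open>i < k\<close>
    by simp
  ultimately show "N i \<le> KDeg L \<beta> i \<or> \<not> has_edge i (KSrc L \<beta>)"
    using deg by auto
qed

end

locale self_similar_graph = higher_rank_graph n L for n :: nat and L :: "'a kgraph" +
  fixes G :: "('g, 'a) groupoid" and lact :: "'g \<Rightarrow> 'a \<Rightarrow> 'a" and ract :: "'g \<Rightarrow> 'a \<Rightarrow> 'g"
  assumes groupoid: "groupoid_on (vertices L) G"
    and action: "self_similar_action L G lact ract"
begin

lemma id_in_mor: "u \<in> vertices L \<Longrightarrow> GId G u \<in> GMor G"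
  and src_id: "u \<in> vertices L \<Longrightarrow> GSrc G (GId G u) = u"
  and rng_id: "u \<in> vertices L \<Longrightarrow> GRng G (GId G u) = u"
  and inv_in_mor: "g \<in> GMor G \<Longrightarrow> GInv G g \<in> GMor G"
  and src_inv: "g \<in> GMor G \<Longrightarrow> GSrc G (GInv G g) = GRng G g"
  and rng_inv: "g \<in> GMor G \<Longrightarrow> GRng G (GInv G g) = GSrc G g"
  and cmp_inv_right: "g \<in> GMor G \<Longrightarrow> GCmp G g (GInv G g) = GId G (GRng G g)"
  and cmp_id_left: "g \<in> GMor G \<Longrightarrow> GCmp G (GId G (GRng G g)) g = g"
  using groupoid unfolding groupoid_on_def by blast+

lemma gcmp_in_mor: "g \<in> GMor G \<Longrightarrow> h \<in> GMor G \<Longrightarrow> GSrc G g = GRng G h \<Longrightarrow> GCmp G g h \<in> GMor G"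
  and rng_gcmp: "g \<in> GMor G \<Longrightarrow> h \<in> GMor G \<Longrightarrow> GSrc G g = GRng G h \<Longrightarrow> GRng G (GCmp G g h) = GRng G g"
  using groupoid unfolding groupoid_on_def by blast+

lemma gcmp_assoc:
  "f \<in> GMor G \<Longrightarrow> g \<in> GMor G \<Longrightarrow> h \<in> GMor G \<Longrightarrow> GSrc G f = GRng G g \<Longrightarrow> GSrc G g = GRng G h \<Longrightarrow>
    GCmp G (GCmp G f g) h = GCmp G f (GCmp G g h)"
  using groupoid unfolding groupoid_on_def by blast

lemma action_closed:
  assumes "g \<in> GMor G" "x \<in> KMor L" "GSrc G g = KRng L x"
  shows "lact g x \<in> KMor L" "ract g x \<in> GMor G" "KRng L (lact g x) = GRng G g"
    "KSrc L (lact g x) = GRng G (ract g x)" "GSrc G (ract g x) = KSrc L x"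
  using assms action unfolding self_similar_action_def by blast+

lemma lact_id: "x \<in> KMor L \<Longrightarrow> lact (GId G (KRng L x)) x = x"
  using action unfolding self_similar_action_def by blast

lemma lact_gcmp:
  "g \<in> GMor G \<Longrightarrow> h \<in> GMor G \<Longrightarrow> x \<in> KMor L \<Longrightarrow> GSrc G g = GRng G h \<Longrightarrow> GSrc G h = KRng L x \<Longrightarrow>
    lact (GCmp G g h) x = lact g (lact h x)"
  using action unfolding self_similar_action_def by blast

lemma lact_inv_cancel:
  assumes "g \<in> GMor G" "x \<in> KMor L" "KRng L x = GRng G g"
  shows "lact g (lact (GInv G g) x) = x"
proof -
  have "lact g (lact (GInv G g) x) = lact (GCmp G g (GInv G g)) x"
    using assms by (simp add: lact_gcmp inv_in_mor src_inv rng_inv)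
  also have "\<dots> = x"
    using assms lact_id[OF assms(2)] by (simp add: cmp_inv_right)
  finally show ?thesis .
qed

lemma gcmp_inv_cancel:
  assumes "g \<in> GMor G" "h \<in> GMor G" "GRng G h = GRng G g"
  shows "GCmp G g (GCmp G (GInv G g) h) = h"
proof -
  have "GCmp G g (GCmp G (GInv G g) h) = GCmp G (GCmp G g (GInv G g)) h"
    using assms by (simp add: gcmp_assoc inv_in_mor src_inv rng_inv)
  also have "\<dots> = h"
    using assms cmp_id_left[OF assms(2)] by (simp add: cmp_inv_right)
  finally show ?thesis .
qed

text \<open>The witness is \<open>(\<eta>, (g \<triangleleft> \<eta>)\<inverse> h)\<close> with \<open>\<eta> = g\<inverse> \<triangleright> w\<close>.\<close>

lemma zs_right_multiple:
  assumes "(\<alpha>, g) \<in> zs_mor L G P" "w \<in> KMor L" "KRng L w = KSrc L \<alpha>"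
    and "h \<in> GMor G" "GRng G h = KSrc L w"
  obtains y where "y \<in> zs_mor L G (\<lambda>_. True)" "zs_src G (\<alpha>, g) = zs_rng L y"
    "zs_cmp L G lact ract (\<alpha>, g) y = (KCmp L \<alpha> w, h)"
proof -
  have g: "g \<in> GMor G" "KSrc L \<alpha> = GRng G g"
    using assms(1) by (auto simp: zs_mor_def)
  define \<eta> where "\<eta> = lact (GInv G g) w"
  have \<eta>: "\<eta> \<in> KMor L" "KRng L \<eta> = GSrc G g" "lact g \<eta> = w"
    unfolding \<eta>_def using g assms(2,3)
    by (simp_all add: action_closed inv_in_mor src_inv rng_inv lact_inv_cancel)
  define r where "r = ract g \<eta>"
  have r: "r \<in> GMor G" "GSrc G r = KSrc L \<eta>" "GRng G r = KSrc L w"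
    using action_closed[OF g(1) \<eta>(1)] \<eta> unfolding r_def by auto
  define y where "y = (\<eta>, GCmp G (GInv G r) h)"
  have "y \<in> zs_mor L G (\<lambda>_. True)"
    unfolding y_def zs_mor_def using \<eta> r assms(4,5)
    by (simp add: gcmp_in_mor rng_gcmp inv_in_mor src_inv rng_inv)
  moreover have "zs_src G (\<alpha>, g) = zs_rng L y"
    unfolding y_def zs_src_def zs_rng_def using \<eta> by simp
  moreover have "zs_cmp L G lact ract (\<alpha>, g) y = (KCmp L \<alpha> w, h)"
    unfolding y_def zs_cmp_def using \<eta> r assms(4,5) by (simp add: r_def[symmetric] gcmp_inv_cancel)
  ultimately show ?thesis using that by blast
qed

lemma saturated_path_extends_exhaustive_set:
  assumes "locally_convex n L" "n = Suc k" "finite F"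
    and F_sub: "F \<subseteq> {c \<in> zs_mor L G (\<lambda>x. KDeg L x k = 0). zs_rng L c = v}"
    and exh: "exhaustive (zs_mor L G (\<lambda>x. KDeg L x k = 0)) (zs_rng L) (zs_src G)
      (zs_cmp L G lact ract) v F"
    and x: "x \<in> KMor L" "KRng L x = v"
    and sat: "saturated k (\<lambda>i. \<Sum>a\<in>F. KDeg L (fst a) i) x"
  obtains \<alpha> g w where "(\<alpha>, g) \<in> F" "w \<in> KMor L" "KRng L w = KSrc L \<alpha>" "x = KCmp L \<alpha> w"
proof -
  define D where "D = KDeg L x"
  have "KDeg L x = (\<lambda>i. (if i = k then 0 else D i) + (if i = k then D i else 0))"
    by (auto simp: D_def)
  then obtain \<beta> \<rho> where \<beta>\<rho>: "\<beta> \<in> KMor L" "\<rho> \<in> KMor L" "KSrc L \<beta> = KRng L \<rho>"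
      "KCmp L \<beta> \<rho> = x" "KDeg L \<beta> = (\<lambda>i. if i = k then 0 else D i)"
      "KDeg L \<rho> = (\<lambda>i. if i = k then D i else 0)"
    by (rule factorisation_exists[OF x(1)])
  have sat_\<beta>: "saturated k (\<lambda>i. \<Sum>a\<in>F. KDeg L (fst a) i) \<beta>"
    using saturated_without_last_colour[OF assms(1), of k \<beta> \<rho> "D k"] \<beta>\<rho> sat assms(2)
    by (auto simp: fun_eq_iff)
  have "(\<beta>, GId G (KSrc L \<beta>)) \<in> zs_mor L G (\<lambda>x. KDeg L x k = 0)"
    "zs_rng L (\<beta>, GId G (KSrc L \<beta>)) = v"
    using \<beta>\<rho> x src_in_vertices[OF \<beta>\<rho>(1)]
    by (auto simp: zs_mor_def zs_rng_def id_in_mor rng_id rng_cmp)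
  with exh obtain a c1 c2 where a: "a \<in> F"
    and c: "c1 \<in> zs_mor L G (\<lambda>x. KDeg L x k = 0)" "c2 \<in> zs_mor L G (\<lambda>x. KDeg L x k = 0)"
    "zs_src G (\<beta>, GId G (KSrc L \<beta>)) = zs_rng L c1" "zs_src G a = zs_rng L c2"
    and meet: "zs_cmp L G lact ract (\<beta>, GId G (KSrc L \<beta>)) c1 = zs_cmp L G lact ract a c2"
    unfolding exhaustive_def by blast
  obtain \<alpha> g where ag: "a = (\<alpha>, g)" "\<alpha> \<in> KMor L" "KDeg L \<alpha> k = 0" "g \<in> GMor G"
    "KSrc L \<alpha> = GRng G g"
    using a F_sub by (auto simp: zs_mor_def)
  define \<mu> where "\<mu> = fst c1"
  have \<mu>: "\<mu> \<in> KMor L" "KRng L \<mu> = KSrc L \<beta>"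
    using c(1,3) src_in_vertices[OF \<beta>\<rho>(1)]
    by (auto simp: \<mu>_def zs_mor_def zs_src_def zs_rng_def src_id)
  define \<nu> where "\<nu> = lact g (fst c2)"
  have \<nu>: "\<nu> \<in> KMor L" "KRng L \<nu> = KSrc L \<alpha>"
    using c(2,4) ag action_closed[OF ag(4), of "fst c2"]
    by (auto simp: \<nu>_def zs_mor_def zs_src_def zs_rng_def)
  have "KCmp L \<beta> \<mu> = KCmp L \<alpha> \<nu>"
    using arg_cong[OF meet, of fst] \<mu> lact_id[OF \<mu>(1)]
    by (simp add: zs_cmp_def ag \<mu>_def \<nu>_def)
  moreover have "KDeg L \<alpha> i \<le> KDeg L \<beta> i" for i
  proof (rule saturated_prefix_bound)
    show "KDeg L \<alpha> j \<le> (\<Sum>a\<in>F. KDeg L (fst a) j)" for j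
      using member_le_sum[OF a, of "\<lambda>a. KDeg L (fst a) j"] assms(3) ag(1) by simp
    show "KDeg L \<alpha> j = 0" if "k \<le> j" for j
      using that ag(3) deg_vanishes_above[OF ag(2)] assms(2) by (cases "j = k") auto
  qed (use \<beta>\<rho> \<mu> \<nu> ag sat_\<beta> \<open>KCmp L \<beta> \<mu> = KCmp L \<alpha> \<nu>\<close> in auto)
  ultimately obtain \<omega> where \<omega>: "\<omega> \<in> KMor L" "KRng L \<omega> = KSrc L \<alpha>" "\<beta> = KCmp L \<alpha> \<omega>"
    by (rule prefix_of_common_extension[OF \<beta>\<rho>(1) \<mu>(1) \<mu>(2)[symmetric] ag(2) \<nu>(1)
        \<nu>(2)[symmetric]])
  have src_\<omega>: "KSrc L \<omega> = KRng L \<rho>"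
    using \<beta>\<rho>(3) \<omega> ag(2) by (simp add: src_cmp)
  show ?thesis
  proof (rule that)
    show "(\<alpha>, g) \<in> F" using a ag(1) by simp
    show "KCmp L \<omega> \<rho> \<in> KMor L" "KRng L (KCmp L \<omega> \<rho>) = KSrc L \<alpha>"
      using \<omega> \<beta>\<rho>(2) src_\<omega> by (simp_all add: cmp_in_mor rng_cmp)
    show "x = KCmp L \<alpha> (KCmp L \<omega> \<rho>)"
      using \<beta>\<rho>(2,4) \<omega> ag(2) src_\<omega> by (simp add: cmp_assoc)
  qed
qed

lemma common_extension_with_exhaustive_set:
  assumes "locally_convex n L" "n = Suc k" "finite F"
    and "F \<subseteq> {c \<in> zs_mor L G (\<lambda>x. KDeg L x k = 0). zs_rng L c = v}"
    and "exhaustive (zs_mor L G (\<lambda>x. KDeg L x k = 0)) (zs_rng L) (zs_src G)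
      (zs_cmp L G lact ract) v F"
    and c: "c \<in> zs_mor L G (\<lambda>_. True)" "zs_rng L c = v"
  shows "\<exists>a\<in>F. \<exists>x\<in>zs_mor L G (\<lambda>_. True). \<exists>y\<in>zs_mor L G (\<lambda>_. True).
    zs_src G c = zs_rng L x \<and> zs_src G a = zs_rng L y
    \<and> zs_cmp L G lact ract c x = zs_cmp L G lact ract a y"
proof -
  obtain p g where pg: "c = (p, g)" "p \<in> KMor L" "KRng L p = v"
    using c by (auto simp: zs_mor_def zs_rng_def)
  obtain \<tau> where \<tau>: "\<tau> \<in> KMor L" "KRng L \<tau> = KSrc L p"
    and sat: "saturated k (\<lambda>i. \<Sum>a\<in>F. KDeg L (fst a) i) (KCmp L p \<tau>)"
    using saturated_extension_exists[OF pg(2)] by blast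
  have p\<tau>: "KCmp L p \<tau> \<in> KMor L" "KRng L (KCmp L p \<tau>) = v" "KSrc L (KCmp L p \<tau>) = KSrc L \<tau>"
    using pg \<tau> by (simp_all add: cmp_in_mor rng_cmp src_cmp)
  obtain \<alpha> h w where \<alpha>: "(\<alpha>, h) \<in> F" and w: "w \<in> KMor L" "KRng L w = KSrc L \<alpha>"
    and p\<tau>_eq: "KCmp L p \<tau> = KCmp L \<alpha> w"
    using saturated_path_extends_exhaustive_set[OF assms(1-5) p\<tau>(1,2) sat] .
  have \<alpha>_mor: "(\<alpha>, h) \<in> zs_mor L G (\<lambda>x. KDeg L x k = 0)"
    using \<alpha> assms(4) by blast
  then have "KSrc L w = KSrc L \<tau>"
    using p\<tau>(3) p\<tau>_eq w by (simp add: zs_mor_def src_cmp)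
  define e where "e = GId G (KSrc L \<tau>)"
  have e: "e \<in> GMor G" "GRng G e = KSrc L \<tau>"
    unfolding e_def using src_in_vertices[OF \<tau>(1)] by (simp_all add: id_in_mor rng_id)
  obtain x where x: "x \<in> zs_mor L G (\<lambda>_. True)" "zs_src G c = zs_rng L x"
    "zs_cmp L G lact ract c x = (KCmp L p \<tau>, e)"
    using zs_right_multiple[of p g "\<lambda>_. True" \<tau> e] c(1) pg(1) \<tau> e by auto
  obtain y where y: "y \<in> zs_mor L G (\<lambda>_. True)" "zs_src G (\<alpha>, h) = zs_rng L y"
    "zs_cmp L G lact ract (\<alpha>, h) y = (KCmp L p \<tau>, e)"
    using zs_right_multiple[OF \<alpha>_mor w, of e] e \<open>KSrc L w = KSrc L \<tau>\<close> p\<tau>_eq by auto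
  show ?thesis
    using \<alpha> x y by fastforce
qed

end

theorem lemma3p18:
  fixes k :: nat and L :: "'a kgraph" and G :: "('g, 'a) groupoid"
    and lact :: "'g \<Rightarrow> 'a \<Rightarrow> 'a" and ract :: "'g \<Rightarrow> 'a \<Rightarrow> 'g"
    and v :: 'a and F :: "('a \<times> 'g) set"
  assumes "is_kgraph (Suc k) L"
    and "locally_convex (Suc k) L"
    and "groupoid_on (vertices L) G"
    and "self_similar_action L G lact ract"
    and "v \<in> vertices L"
    and "finite F"
    and "F \<subseteq> {c \<in> zs_mor L G (\<lambda>x. KDeg L x k = 0). zs_rng L c = v}"
    and "exhaustive (zs_mor L G (\<lambda>x. KDeg L x k = 0)) (zs_rng L) (zs_src G)
           (zs_cmp L G lact ract) v F"
  shows "exhaustive (zs_mor L G (\<lambda>_. True)) (zs_rng L) (zs_src G)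
           (zs_cmp L G lact ract) v F"
proof -
  interpret self_similar_graph "Suc k" L G lact ract
    using assms(1,3,4) by unfold_locales
  have "\<exists>a\<in>F. \<exists>x\<in>zs_mor L G (\<lambda>_. True). \<exists>y\<in>zs_mor L G (\<lambda>_. True).
      zs_src G c = zs_rng L x \<and> zs_src G a = zs_rng L y
      \<and> zs_cmp L G lact ract c x = zs_cmp L G lact ract a y"
    if "c \<in> zs_mor L G (\<lambda>_. True)" "zs_rng L c = v" for c
    using common_extension_with_exhaustive_set[OF assms(2) refl assms(6-8) that] .
  with assms(7) show ?thesis
    unfolding exhaustive_def zs_mor_def by auto
qed

end
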